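(* Let $b\ge 2$ be an integer. Every natural number that is antipalindromic in base $b$ and whose base-$b$ expansion has an odd number of digits is divisible by $\frac{b-1}{2}$ (in particular, $b$ is then odd, so $\frac{b-1}{2}$ is an integer).
   Context: For an integer $b\ge 2$, every natural number $m$ has a unique base-$b$ expansion $m=a_nb^n+\dots+a_1b+a_0$ with $a_0,\dots,a_n\in\{0,1,\dots,b-1\}$ and $a_n\neq 0$ (it has $n+1$ digits). The number $m$ is antipalindromic in base $b$ if $a_j=b-1-a_{n-j}$ for all $j\in\{0,1,\dots,n\}$. *)

theory Defs
  imports Main
begin

definition digit :: "nat \<Rightarrow> nat \<Rightarrow> nat \<Rightarrow> nat" where
  "digit b m j = (m div b ^ j) mod b"

text \<open>Number of base-b digits of m, i.e. n+1 where a_n is the leading nonzero digit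
  (for m > 0 and b >= 2): the least k with m < b^k.\<close>
definition num_digits :: "nat \<Rightarrow> nat \<Rightarrow> nat" where
  "num_digits b m = (LEAST k. m < b ^ k)"

text \<open>Natural numbers with a base-b expansion having a
  nonzero leading digit are the positive ones.\<close>
definition antipalindromic :: "nat \<Rightarrow> nat \<Rightarrow> bool" where
  "antipalindromic b m \<longleftrightarrow> m > 0 \<and>
     (\<forall>j \<le> num_digits b m - 1.
        digit b m j = b - 1 - digit b m (num_digits b m - 1 - j))"

end

theory Submission
  imports Defs
begin

text \<open>Pairing the digit a_j with a_{n-j} shows that the digits of an antipalindromic
  number with N digits add up to N(b-1)/2; for odd N the middle digit satisfies
  2 a_{n/2} = b - 1, so b is odd. Since b \<equiv> 1 modulo c = (b-1)/2, a number is
  congruent to its digit sum modulo c, and that digit sum N c is divisible by c.\<close>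

lemma digit_less: "0 < b \<Longrightarrow> digit b m j < b"
  by (simp add: digit_def)

lemma mod_power_eq_sum_digits: "m mod b ^ n = (\<Sum>j<n. digit b m j * b ^ j)"
proof (induction n)
  case 0
  then show ?case by simp
next
  case (Suc n)
  have "m mod b ^ Suc n = b ^ n * (m div b ^ n mod b) + m mod b ^ n"
    using mod_mult2_eq[of m "b ^ n" b] by (simp add: mult.commute)
  with Suc show ?case by (simp add: digit_def mult.commute)
qed

lemma less_power_num_digits:
  assumes "2 \<le> b"
  shows "m < b ^ num_digits b m"
proof -
  have "m < 2 ^ m" by (rule less_exp)
  also have "(2::nat) ^ m \<le> b ^ m" using assms by (rule power_mono) simp
  finally show ?thesis unfolding num_digits_def by (rule LeastI)
qed

lemma mod_eq_mod_sum_digits: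
  assumes "0 < b" and "c dvd b - 1" and "m < b ^ n"
  shows "m mod c = (\<Sum>j<n. digit b m j) mod c"
proof -
  have "b mod c = 1 mod c"
    using assms(1,2) mod_eq_dvd_iff_nat[of 1 b c] by simp
  then have power_mod_1: "b ^ j mod c = 1 mod c" for j
    by (metis power_mod power_one)
  have "m mod c = (\<Sum>j<n. digit b m j * b ^ j) mod c"
    using assms(3) mod_power_eq_sum_digits[of m b n] by simp
  also have "\<dots> = (\<Sum>j<n. digit b m j * b ^ j mod c) mod c"
    by (rule mod_sum_eq[symmetric])
  also have "(\<Sum>j<n. digit b m j * b ^ j mod c) = (\<Sum>j<n. digit b m j mod c)"
    by (rule sum.cong) (simp_all add: mod_mult_right_eq[of _ "b ^ _", symmetric] power_mod_1)
  also have "(\<Sum>j<n. digit b m j mod c) mod c = (\<Sum>j<n. digit b m j) mod c"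
    by (rule mod_sum_eq)
  finally show ?thesis .
qed

lemma antipalindromic_digit_pair:
  assumes "0 < b" and "antipalindromic b m" and "j < num_digits b m"
  shows "digit b m j + digit b m (num_digits b m - 1 - j) = b - 1"
proof -
  let ?N = "num_digits b m"
  have "digit b m i = b - 1 - digit b m (?N - 1 - i)" if "i \<le> ?N - 1" for i
    using assms(2) that unfolding antipalindromic_def by blast
  from this[of "?N - 1 - j"] have "digit b m (?N - 1 - j) = b - 1 - digit b m j"
    using assms(3) by (simp add: Suc_diff_Suc)
  with digit_less[OF assms(1), of m j] show ?thesis by simp
qed

lemma antipalindromic_sum_digits:
  assumes "0 < b" and "antipalindromic b m"
  shows "2 * (\<Sum>j<num_digits b m. digit b m j) = num_digits b m * (b - 1)"
proof -
  let ?N = "num_digits b m"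
  have "2 * (\<Sum>j<?N. digit b m j) = (\<Sum>j<?N. digit b m j) + (\<Sum>j<?N. digit b m (?N - Suc j))"
    by (simp add: sum.nat_diff_reindex)
  also have "\<dots> = (\<Sum>j<?N. digit b m j + digit b m (?N - 1 - j))"
    by (simp add: sum.distrib)
  also have "\<dots> = (\<Sum>j<?N. b - 1)"
    using antipalindromic_digit_pair[OF assms] by simp
  finally show ?thesis by simp
qed

lemma antipalindromic_odd_length_imp_odd_base:
  assumes "0 < b" and "antipalindromic b m" and "odd (num_digits b m)"
  shows "odd b"
proof -
  obtain k where "num_digits b m = 2 * k + 1"
    using assms(3) oddE by blast
  then have "digit b m k + digit b m k = b - 1"
    using antipalindromic_digit_pair[OF assms(1,2), of k] by simp
  then have "b = 2 * digit b m k + 1"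
    using assms(1) by simp
  then show ?thesis by presburger
qed

theorem mainTheorem4:
  fixes b m :: nat
  assumes "b \<ge> 2"
    and "antipalindromic b m"
    and "odd (num_digits b m)"
  shows "odd b \<and> ((b - 1) div 2) dvd m"
proof
  have "0 < b" using assms(1) by simp
  show odd_b: "odd b"
    using antipalindromic_odd_length_imp_odd_base[OF \<open>0 < b\<close> assms(2,3)] .
  define c where "c = (b - 1) div 2"
  have b_minus_1: "b - 1 = 2 * c"
    using odd_b \<open>0 < b\<close> c_def by simp
  then have "c dvd b - 1" by simp
  have digit_sum: "(\<Sum>j<num_digits b m. digit b m j) = num_digits b m * c"
    using antipalindromic_sum_digits[OF \<open>0 < b\<close> assms(2)] b_minus_1 by simp
  have "m mod c = (\<Sum>j<num_digits b m. digit b m j) mod c"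
    by (rule mod_eq_mod_sum_digits[OF \<open>0 < b\<close> \<open>c dvd b - 1\<close> less_power_num_digits[OF assms(1)]])
  then show "c dvd m"
    unfolding digit_sum by (simp add: mod_eq_0_iff_dvd)
qed

end
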